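(* Let $\underline x=(x_1,\dots,x_n)$ be a labeled configuration of $n\ge2$ particles at distinct sites of $\Lambda_N$, let $t>s>0$, and let $f:\Lambda_N^n\to\mathbb{R}$ be antisymmetric under exchange of its first two arguments $y_1,y_2$. Then $$\mathbf{E}_{\epsilon,\underline x}\big[\mathbf 1_{\tau_{x_1,x_2}\le s}\,f(\underline x(t))\big]=0.$$
   Context: $\Lambda_N=[-N,N]\cap\mathbb Z$, $\epsilon=1/N$. Active/passive marks process: for each pair $\{x,x+1\}$, $x\in\mathbb Z$, an independent Poisson process of intensity $\epsilon^{-2}$ (its events are "marks"), and each mark is independently declared "active" or "passive" with probability $1/2$ each; law $\mathbf P_\epsilon$, expectation $\mathbf E_\epsilon$. Labeled stirring particles in $\Lambda_N$ evolve as follows: when an active mark appears at a pair $\{x,y\}$ with both $x,y\in\Lambda_N$, the contents of $x$ and $y$ are exchanged (a particle at $x$ moves to $y$ and a particle at $y$, if any, moves to $x$); passive marks and marks at pairs not contained in $\Lambda_N$ have no effect. Labels stay attached to particles; $\underline x(t)=(x_1(t),\dots,x_n(t))$ is the labeled configuration at time $t$ and $\mathbf E_{\epsilon,\underline x}$ denotes expectation when $\underline x(0)=\underline x$. $\tau_{x_1,x_2}$ is the first time $s\ge0$ such that $|x_1(s)-x_2(s)|=1$ and a mark (active or passive) appears at time $s$ at the pair $\{x_1(s),x_2(s)\}$ ($\tau_{x_1,x_2}=\infty$ if no such time). *)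

theory Defs
  imports "HOL-Probability.Probability"
begin

text \<open>A sample point \<omega> :: int => nat => real * bool describes, for each pair {x,x+1}
(indexed by x :: int), the sequence of its marks: fst (\<omega> x k) is the k-th inter-arrival
time (exponential with rate eps^-2 = N^2), snd (\<omega> x k) says whether the k-th mark is
active (True) or passive (False), with probability 1/2 each.\<close>

definition mark_law :: "nat \<Rightarrow> (real \<times> bool) measure" where
  "mark_law N = density lborel (exponential_density ((real N)\<^sup>2))
                 \<Otimes>\<^sub>M measure_pmf (bernoulli_pmf (1/2))"

definition marks_measure :: "nat \<Rightarrow> (int \<Rightarrow> nat \<Rightarrow> real \<times> bool) measure" where
  "marks_measure N = PiM UNIV (\<lambda>x::int. PiM UNIV (\<lambda>k::nat. mark_law N))"

definition mark_time :: "(int \<Rightarrow> nat \<Rightarrow> real \<times> bool) \<Rightarrow> int \<Rightarrow> nat \<Rightarrow> real" where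
  "mark_time \<omega> x k = (\<Sum>j\<le>k. fst (\<omega> x j))"

definition mark_active :: "(int \<Rightarrow> nat \<Rightarrow> real \<times> bool) \<Rightarrow> int \<Rightarrow> nat \<Rightarrow> bool" where
  "mark_active \<omega> x k = snd (\<omega> x k)"

definition Lambda :: "nat \<Rightarrow> int set" where
  "Lambda N = {- int N .. int N}"

text \<open>The effective
marks up to time r are processed in increasing order of their times; active marks at exactly
the same time (a null event) are processed in increasing order of the pair index.\<close>
definition effective_times :: "nat \<Rightarrow> (int \<Rightarrow> nat \<Rightarrow> real \<times> bool) \<Rightarrow> real \<Rightarrow> real set" where
  "effective_times N \<omega> r =
     {mark_time \<omega> x k | x k. - int N \<le> x \<and> x + 1 \<le> int N \<and> mark_time \<omega> x k \<le> r}"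

definition active_pairs_at :: "nat \<Rightarrow> (int \<Rightarrow> nat \<Rightarrow> real \<times> bool) \<Rightarrow> real \<Rightarrow> int set" where
  "active_pairs_at N \<omega> u =
     {x. - int N \<le> x \<and> x + 1 \<le> int N \<and> (\<exists>k. mark_time \<omega> x k = u \<and> mark_active \<omega> x k)}"

definition swap_site :: "int \<Rightarrow> int \<Rightarrow> int" where
  "swap_site x p = (if p = x then x + 1 else if p = x + 1 then x else p)"

definition step_at :: "nat \<Rightarrow> (int \<Rightarrow> nat \<Rightarrow> real \<times> bool) \<Rightarrow> real \<Rightarrow> int list \<Rightarrow> int list" where
  "step_at N \<omega> u ys =
     fold (\<lambda>x zs. map (swap_site x) zs) (sorted_list_of_set (active_pairs_at N \<omega> u)) ys"

text \<open>Labeled configuration x(r) at time r (right-continuous), started from the labeled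
configuration xs (xs ! i = position of particle i+1).\<close>
definition config :: "nat \<Rightarrow> (int \<Rightarrow> nat \<Rightarrow> real \<times> bool) \<Rightarrow> int list \<Rightarrow> real \<Rightarrow> int list" where
  "config N \<omega> xs r = fold (step_at N \<omega>) (sorted_list_of_set (effective_times N \<omega> r)) xs"

definition tau12 :: "nat \<Rightarrow> (int \<Rightarrow> nat \<Rightarrow> real \<times> bool) \<Rightarrow> int list \<Rightarrow> ereal" where
  "tau12 N \<omega> xs = Inf (ereal ` {r. 0 \<le> r \<and>
      (let c = config N \<omega> xs r in
        \<bar>c ! 0 - c ! 1\<bar> = 1 \<and>
        (\<exists>x k. mark_time \<omega> x k = r \<and> {x, x + 1} = {c ! 0, c ! 1}))})"

end

theory Submission
  imports Defs
begin

text \<open>Up to time \<open>t\<close> only finitely many marks of pairs inside \<open>\<Lambda>\<^sub>N\<close> matter, and almost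
  surely they occur at distinct positive times. Listing them chronologically, together with their
  activity and with whether they occur by time \<open>s\<close>, gives a finite word from which both the event
  \<open>\<tau> \<le> s\<close> and the configuration \<open>x(t)\<close> can be read off. On \<open>\<tau> \<le> s\<close>, toggle the activity of the
  mark at time \<open>\<tau>\<close>: its swap maps the pair of that mark onto itself, so \<open>\<tau>\<close> is unchanged, but
  particles 1 and 2 (the only particles on that pair) are exchanged from time \<open>\<tau>\<close> on, so the first
  two entries of \<open>x(t)\<close> are exchanged. Toggling the activity of a fixed mark preserves the law of
  the marks, so the law of the word is invariant under this involution, while the integrand
  changes sign by the antisymmetry of \<open>f\<close>.\<close>

context linorder
begin

lemma sorted_key_list_of_set_eq_iff:
  assumes "inj_on f A" "finite A"
  shows "sorted_key_list_of_set f A = l \<longleftrightarrow> set l = A \<and> sorted_wrt (<) (map f l)"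
proof -
  interpret folding_insort_key "(\<le>)" "(<)" A f by unfold_locales (fact assms(1))
  have "length l = card A" if "set l = A" "sorted_wrt (<) (map f l)"
    using that by (metis distinct_card distinct_map strict_sorted_iff)
  then show ?thesis using sorted_key_list_of_set_unique[OF subset_refl assms(2)] by blast
qed

end

lemma filter_le_nth_eq_take:
  fixes f :: "'a \<Rightarrow> 'b::linorder"
  assumes "sorted_wrt (<) (map f S)" and "i < length S"
  shows "filter (\<lambda>p. f p \<le> f (S ! i)) S = take (Suc i) S"
  using assms
proof (induction S arbitrary: i)
  case (Cons a S)
  then have a: "\<forall>q\<in>set S. f a < f q" and S: "sorted_wrt (<) (map f S)" by auto
  show ?case
  proof (cases i)
    case 0
    have "filter (\<lambda>p. f p \<le> f a) S = []" using a by (simp add: filter_empty_conv not_le)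
    with 0 show ?thesis by simp
  next
    case (Suc j)
    then have "f a < f (S ! j)" using a Cons.prems(2) by simp
    then show ?thesis using Cons.IH[OF S] Cons.prems(2) Suc by simp
  qed
qed simp

lemma length_ge_2E:
  assumes "length ys \<ge> 2"
  obtains u v zs where "ys = u # v # zs"
  using assms by (cases ys; cases "tl ys") auto

section \<open>Product probability spaces\<close>

lemma measurable_PiM_fun_upd_self:
  fixes M :: "'i \<Rightarrow> 'a measure"
  assumes h: "h \<in> measurable (M a) (M a)"
  shows "(\<lambda>w. w(a := h (w a))) \<in> measurable (PiM UNIV M) (PiM UNIV M)"
proof (rule measurable_fun_upd[where J=UNIV])
  have "(\<lambda>w. w a) \<in> measurable (PiM UNIV M) (M a)"
    by (rule measurable_component_singleton) auto
  then show "(\<lambda>w. h (w a)) \<in> measurable (PiM UNIV M) (M a)"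
    using h by (rule measurable_compose)
qed auto

lemma distr_PiM_fun_upd_self:
  fixes M :: "'i \<Rightarrow> 'a measure"
  assumes ps: "\<And>i. prob_space (M i)" and h: "h \<in> measurable (M a) (M a)"
    and h_preserving: "distr (M a) (M a) h = M a"
  shows "distr (PiM UNIV M) (PiM UNIV M) (\<lambda>w. w(a := h (w a))) = PiM UNIV M"
proof -
  interpret product_prob_space M UNIV
    using ps by (simp add: product_prob_space_def product_sigma_finite_def
        product_prob_space_axioms_def prob_space_imp_sigma_finite)
  let ?F = "\<lambda>w. w(a := h (w a))"
  have F: "?F \<in> measurable (PiM UNIV M) (PiM UNIV M)"
    using h by (rule measurable_PiM_fun_upd_self)
  show ?thesis
  proof (rule PiM_eq)
    fix J A assume J: "finite J" "J \<subseteq> (UNIV::'i set)" and A: "\<And>j. j \<in> J \<Longrightarrow> A j \<in> sets (M j)"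
    define A' where "A' = A(a := h -` A a \<inter> space (M a))"
    have A': "\<And>j. j \<in> J \<Longrightarrow> A' j \<in> sets (M j)"
      using A h by (auto simp: A'_def measurable_sets)
    have "?F -` prod_emb UNIV M J (Pi\<^sub>E J A) \<inter> space (PiM UNIV M) = prod_emb UNIV M J (Pi\<^sub>E J A')"
      using h[THEN measurable_space] A[THEN sets.sets_into_space]
      by (auto simp: prod_emb_def space_PiM PiE_iff A'_def extensional_def split: if_splits)
    then have "emeasure (distr (PiM UNIV M) (PiM UNIV M) ?F) (prod_emb UNIV M J (Pi\<^sub>E J A))
        = emeasure (PiM UNIV M) (prod_emb UNIV M J (Pi\<^sub>E J A'))"
      using A J by (subst emeasure_distr[OF F]) (auto intro!: sets_PiM_I)
    also have "\<dots> = (\<Prod>j\<in>J. emeasure (M j) (A' j))"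
      using A' J by (intro emeasure_PiM_emb) auto
    also have "\<dots> = (\<Prod>j\<in>J. emeasure (M j) (A j))"
    proof (rule prod.cong[OF refl])
      fix j assume "j \<in> J"
      have "emeasure (M a) (h -` A a \<inter> space (M a)) = emeasure (distr (M a) (M a) h) (A a)"
        if "j = a" using A \<open>j \<in> J\<close> that by (subst emeasure_distr[OF h]) auto
      then show "emeasure (M j) (A' j) = emeasure (M j) (A j)"
        using h_preserving by (simp add: A'_def)
    qed
    finally show "emeasure (distr (PiM UNIV M) (PiM UNIV M) ?F) (prod_emb UNIV M J (Pi\<^sub>E J A))
        = (\<Prod>j\<in>J. emeasure (M j) (A j))" .
  qed simp
qed

lemma AE_PiM_split_component:
  fixes M :: "'i \<Rightarrow> 'a measure"
  assumes ps: "\<And>i. prob_space (M i)"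
    and Q: "{w \<in> space (PiM UNIV M). Q w} \<in> sets (PiM UNIV M)"
    and ae: "AE z in M i \<Otimes>\<^sub>M PiM (UNIV - {i}) M. Q ((snd z)(i := fst z))"
  shows "AE w in PiM UNIV M. Q w"
proof -
  have "insert i (UNIV - {i}) = UNIV" by auto
  then have d: "distr (M i \<Otimes>\<^sub>M PiM (UNIV - {i}) M) (PiM UNIV M) (\<lambda>(x, X). X(i := x)) = PiM UNIV M"
    using distr_pair_PiM_eq_PiM[of "UNIV - {i}" M i] ps by simp
  have "(\<lambda>z. (snd z)(i := fst z)) \<in> measurable (M i \<Otimes>\<^sub>M PiM (UNIV - {i}) M) (PiM UNIV M)"
    by (rule measurable_fun_upd[where J="UNIV - {i}"]) auto
  then have m: "(\<lambda>(x, X). X(i := x)) \<in> measurable (M i \<Otimes>\<^sub>M PiM (UNIV - {i}) M) (PiM UNIV M)"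
    by (simp add: case_prod_beta')
  have "AE w in distr (M i \<Otimes>\<^sub>M PiM (UNIV - {i}) M) (PiM UNIV M) (\<lambda>(x, X). X(i := x)). Q w"
    using ae by (subst AE_distr_iff[OF m Q]) (simp add: case_prod_beta')
  then show ?thesis by (simp only: d)
qed

lemma AE_pair_measure_neq:
  assumes A: "prob_space A" and B: "prob_space B"
    and [measurable]: "\<phi> \<in> borel_measurable A" "\<psi> \<in> borel_measurable B"
    and avoids: "\<And>c. AE a in A. \<phi> a \<noteq> (c::real)"
  shows "AE z in A \<Otimes>\<^sub>M B. \<phi> (fst z) \<noteq> \<psi> (snd z)"
proof -
  interpret pair_sigma_finite A B
    by (intro pair_sigma_finite.intro prob_space_imp_sigma_finite A B)
  have S: "{z \<in> space (A \<Otimes>\<^sub>M B). \<phi> (fst z) \<noteq> \<psi> (snd z)} \<in> sets (A \<Otimes>\<^sub>M B)"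
    by measurable
  have "AE b in B. AE a in A. \<phi> a \<noteq> \<psi> b" by (intro AE_I2 avoids)
  then have "AE a in A. AE b in B. \<phi> a \<noteq> \<psi> b"
    using AE_commute[of "\<lambda>a b. \<phi> a \<noteq> \<psi> b"] S by simp
  then show ?thesis by (intro AE_pair_measure S) simp
qed

lemma integral_eq_0_if_odd_under_preserving_map:
  fixes \<phi> :: "'a \<Rightarrow> real"
  assumes \<rho>: "\<rho> \<in> measurable M M" and invariant: "distr M M \<rho> = M"
    and \<phi>: "\<phi> \<in> borel_measurable M"
    and antisym: "\<And>x. x \<in> space M \<Longrightarrow> \<phi> (\<rho> x) = - \<phi> x"
  shows "integral\<^sup>L M \<phi> = 0"
proof -
  have "integral\<^sup>L M \<phi> = integral\<^sup>L (distr M M \<rho>) \<phi>" by (simp only: invariant)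
  also have "\<dots> = integral\<^sup>L M (\<lambda>x. \<phi> (\<rho> x))"
    using \<rho> \<phi> by (rule integral_distr)
  also have "\<dots> = integral\<^sup>L M (\<lambda>x. - \<phi> x)"
    using antisym by (rule Bochner_Integration.integral_cong[OF refl])
  finally show ?thesis by simp
qed

section \<open>The law of the marks\<close>

type_synonym sample = "int \<Rightarrow> nat \<Rightarrow> real \<times> bool"

abbreviation gap_law :: "nat \<Rightarrow> real measure" where
  "gap_law N \<equiv> density lborel (exponential_density ((real N)\<^sup>2))"

abbreviation mark_seq_law :: "nat \<Rightarrow> (nat \<Rightarrow> real \<times> bool) measure" where
  "mark_seq_law N \<equiv> PiM UNIV (\<lambda>k::nat. mark_law N)"

lemma prob_space_gap_law: "N \<ge> 1 \<Longrightarrow> prob_space (gap_law N)"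
  by (rule prob_space_exponential_density) simp

lemma prob_space_mark_law: "N \<ge> 1 \<Longrightarrow> prob_space (mark_law N)"
  unfolding mark_law_def by (intro prob_space_pair prob_space_gap_law prob_space_measure_pmf)

lemma prob_space_mark_seq_law: "N \<ge> 1 \<Longrightarrow> prob_space (mark_seq_law N)"
  by (intro prob_space_PiM prob_space_mark_law)

lemma sets_mark_law: "sets (mark_law N) = sets (borel \<Otimes>\<^sub>M count_space UNIV)"
  unfolding mark_law_def by (intro sets_pair_measure_cong) auto

lemma borel_measurable_fst_mark_law[measurable]: "fst \<in> borel_measurable (mark_law N)"
  by (simp add: measurable_cong_sets[OF sets_mark_law refl])

lemma measurable_snd_mark_law[measurable]: "snd \<in> measurable (mark_law N) (count_space UNIV)"
  by (simp add: measurable_cong_sets[OF sets_mark_law refl])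

lemma measurable_mark[measurable]: "(\<lambda>w. w x k) \<in> measurable (marks_measure N) (mark_law N)"
proof -
  have "(\<lambda>w. w x) \<in> measurable (marks_measure N) (mark_seq_law N)"
    unfolding marks_measure_def by (rule measurable_component_singleton) auto
  then show ?thesis by (rule measurable_compose) measurable
qed

lemma borel_measurable_mark_time[measurable]:
  "(\<lambda>w. mark_time w x k) \<in> borel_measurable (marks_measure N)"
  unfolding mark_time_def by measurable

lemma pred_mark_time_eq[measurable]:
  "Measurable.pred (marks_measure N) (\<lambda>w. mark_time w x k = mark_time w x' k')"
  unfolding pred_def by (rule borel_measurable_eq) measurable

lemma map_pmf_Not_bernoulli_half: "map_pmf Not (bernoulli_pmf (1/2)) = bernoulli_pmf (1/2)"
proof (rule pmf_eqI)
  fix b :: bool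
  have "pmf (map_pmf Not (bernoulli_pmf (1/2))) (\<not> \<not> b) = pmf (bernoulli_pmf (1/2)) (\<not> b)"
    by (rule pmf_map_inj') (auto intro: injI)
  then show "pmf (map_pmf Not (bernoulli_pmf (1/2))) b = pmf (bernoulli_pmf (1/2)) b" by simp
qed

definition toggle_activity :: "real \<times> bool \<Rightarrow> real \<times> bool" where
  "toggle_activity m = (fst m, \<not> snd m)"

lemma measurable_toggle_activity: "toggle_activity \<in> measurable (mark_law N) (mark_law N)"
  unfolding toggle_activity_def by (simp add: measurable_cong_sets[OF sets_mark_law sets_mark_law])

lemma distr_mark_law_toggle_activity:
  assumes "N \<ge> 1"
  shows "distr (mark_law N) (mark_law N) toggle_activity = mark_law N"
proof -
  let ?B = "measure_pmf (bernoulli_pmf (1/2))"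
  have "distr ?B ?B Not = distr ?B (count_space UNIV) Not"
    by (rule distr_cong) auto
  then have B: "distr ?B ?B Not = ?B"
    by (simp add: map_pmf_rep_eq[symmetric] map_pmf_Not_bernoulli_half)
  have "distr (gap_law N) (gap_law N) (\<lambda>x. x) \<Otimes>\<^sub>M distr ?B ?B Not
      = distr (gap_law N \<Otimes>\<^sub>M ?B) (gap_law N \<Otimes>\<^sub>M ?B) (\<lambda>(x, b). (x, \<not> b))"
    by (rule pair_measure_distr) (auto simp: B intro: prob_space_imp_sigma_finite prob_space_measure_pmf)
  then show ?thesis
    by (simp add: B mark_law_def case_prod_beta' toggle_activity_def[abs_def])
qed

definition toggle_mark :: "int \<Rightarrow> nat \<Rightarrow> sample \<Rightarrow> sample" where
  "toggle_mark x k w = w(x := (w x)(k := toggle_activity (w x k)))"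

lemma measurable_toggle_mark: "toggle_mark x k \<in> measurable (marks_measure N) (marks_measure N)"
  unfolding marks_measure_def toggle_mark_def
  by (intro measurable_PiM_fun_upd_self[where M="\<lambda>_. mark_seq_law N"]
      measurable_PiM_fun_upd_self[where M="\<lambda>_. mark_law N"] measurable_toggle_activity)

lemma distr_toggle_mark:
  assumes N: "N \<ge> 1"
  shows "distr (marks_measure N) (marks_measure N) (toggle_mark x k) = marks_measure N"
proof -
  let ?h = "\<lambda>v. v(k := toggle_activity (v k))"
  have h: "?h \<in> measurable (mark_seq_law N) (mark_seq_law N)"
    by (intro measurable_PiM_fun_upd_self measurable_toggle_activity)
  have "distr (mark_seq_law N) (mark_seq_law N) ?h = mark_seq_law N"
    using prob_space_mark_law[OF N] measurable_toggle_activity distr_mark_law_toggle_activity[OF N]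
    by (rule distr_PiM_fun_upd_self)
  then have "distr (PiM UNIV (\<lambda>_::int. mark_seq_law N)) (PiM UNIV (\<lambda>_::int. mark_seq_law N))
      (\<lambda>w. w(x := ?h (w x))) = PiM UNIV (\<lambda>_::int. mark_seq_law N)"
    by (rule distr_PiM_fun_upd_self[OF prob_space_mark_seq_law[OF N] h])
  then show ?thesis unfolding marks_measure_def toggle_mark_def by simp
qed

lemma AE_gap_law: "AE x in gap_law N. 0 < x \<and> x \<noteq> c"
proof (subst AE_density)
  show "AE x in lborel. 0 < ennreal (exponential_density ((real N)\<^sup>2) x) \<longrightarrow> 0 < x \<and> x \<noteq> c"
    using AE_lborel_singleton[of c] AE_lborel_singleton[of 0]
    by eventually_elim (auto simp: exponential_density_def)
qed simp

lemma AE_mark_law_fst: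
  assumes N: "N \<ge> 1" and ae: "AE x in gap_law N. P x"
  shows "AE m in mark_law N. P (fst m)"
proof (rule AE_distrD[of fst _ "gap_law N"])
  show "fst \<in> measurable (mark_law N) (gap_law N)"
    by (simp add: measurable_cong_sets[OF sets_mark_law refl])
  have d: "distr (mark_law N) (gap_law N) fst = gap_law N"
    unfolding mark_law_def by (rule prob_space.distr_pair_fst[OF prob_space_measure_pmf])
  show "AE x in distr (mark_law N) (gap_law N) fst. P x" unfolding d by (rule ae)
qed

lemma emeasure_mark_law_fst_le:
  assumes N: "N \<ge> 1" and t: "0 \<le> t"
  shows "emeasure (mark_law N) {m. fst m \<le> t} = ennreal (1 - exp (- t * (real N)\<^sup>2))"
proof -
  interpret D: prob_space "gap_law N" by (rule prob_space_gap_law[OF N])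
  have "distributed (gap_law N) lborel (\<lambda>x. x) (exponential_density ((real N)\<^sup>2))"
    unfolding distributed_def by (auto simp: distr_id2)
  then have "D.prob {x \<in> space (gap_law N). x \<le> t} = 1 - exp (- t * (real N)\<^sup>2)"
    using D.exponential_distributedD_le t N by simp
  moreover have "{m. fst m \<le> t} = {..t} \<times> (UNIV :: bool set)" by auto
  ultimately show ?thesis
    by (simp add: mark_law_def measure_pmf.emeasure_pair_measure_Times D.emeasure_eq_measure
        Collect_mem_eq atMost_def measure_pmf.emeasure_space_1[simplified])
qed

lemma AE_mark_seq_exceeds:
  assumes N: "N \<ge> 1" and t: "0 \<le> t"
  shows "AE \<psi> in mark_seq_law N. \<exists>j. t < fst (\<psi> j)"
proof -
  define p where "p = 1 - exp (- t * (real N)\<^sup>2)"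
  have p: "0 \<le> p" "p < 1" using t by (auto simp: p_def)
  define B where "B = {m::real \<times> bool. fst m \<le> t}"
  have "B = {m \<in> space (borel \<Otimes>\<^sub>M count_space UNIV). fst m \<le> t}"
    by (auto simp: B_def space_pair_measure)
  also have "\<dots> \<in> sets (borel \<Otimes>\<^sub>M count_space UNIV)" by measurable
  finally have B_sets: "B \<in> sets (mark_law N)" unfolding sets_mark_law .
  define A where "A = {\<psi> \<in> space (mark_seq_law N). \<forall>j. fst (\<psi> j) \<le> t}"
  have A_sets: "A \<in> sets (mark_seq_law N)" unfolding A_def by measurable
  have bound: "emeasure (mark_seq_law N) A \<le> ennreal (p ^ Suc K)" for K
  proof -
    have "A \<subseteq> prod_emb UNIV (\<lambda>_. mark_law N) {..K} (Pi\<^sub>E {..K} (\<lambda>_. B))"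
      by (auto simp: A_def prod_emb_def B_def space_PiM)
    then have "emeasure (mark_seq_law N) A
        \<le> emeasure (mark_seq_law N) (prod_emb UNIV (\<lambda>_. mark_law N) {..K} (Pi\<^sub>E {..K} (\<lambda>_. B)))"
      by (rule emeasure_mono) (auto intro!: sets_PiM_I B_sets)
    also have "\<dots> = (\<Prod>j\<in>{..K}. emeasure (mark_law N) B)"
      by (rule emeasure_PiM_emb) (auto simp: prob_space_mark_law[OF N] B_sets)
    also have "\<dots> = ennreal (p ^ Suc K)"
      using p emeasure_mark_law_fst_le[OF N t]
      by (simp add: B_def p_def ennreal_power ennreal_mult)
    finally show ?thesis .
  qed
  have "(\<lambda>K. ennreal (p ^ Suc K)) \<longlonglongrightarrow> ennreal 0"
    using p by (intro tendsto_ennrealI LIMSEQ_Suc LIMSEQ_power_zero) auto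
  then have "emeasure (mark_seq_law N) A \<le> 0"
    by (intro tendsto_le[OF sequentially_bot _ tendsto_const])
      (auto simp del: power_Suc intro: always_eventually bound)
  then have "A \<in> null_sets (mark_seq_law N)" using A_sets by (simp add: null_sets_def)
  then show ?thesis by (rule AE_I') (auto simp: A_def not_less)
qed

lemma AE_mark_seq_all:
  "N \<ge> 1 \<Longrightarrow> AE m in mark_law N. P m \<Longrightarrow> AE \<psi> in mark_seq_law N. \<forall>k. P (\<psi> k)"
  by (intro AE_all_countable[THEN iffD2] allI AE_PiM_component prob_space_mark_law) auto

lemma AE_marks_all:
  "N \<ge> 1 \<Longrightarrow> AE \<psi> in mark_seq_law N. P \<psi> \<Longrightarrow> AE w in marks_measure N. \<forall>x. P (w x)"
  unfolding marks_measure_def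
  by (intro AE_all_countable[THEN iffD2] allI AE_PiM_component prob_space_mark_seq_law) auto

lemma AE_mark_seq_sum_neq:
  assumes N: "N \<ge> 1"
  shows "AE \<psi> in mark_seq_law N. (\<Sum>j\<le>k. fst (\<psi> j)) \<noteq> c"
proof (rule AE_PiM_split_component[where i=0])
  show "prob_space (mark_law N)" for i by (rule prob_space_mark_law[OF N])
  show "{\<psi> \<in> space (mark_seq_law N). (\<Sum>j\<le>k. fst (\<psi> j)) \<noteq> c} \<in> sets (mark_seq_law N)"
    by measurable
  have split: "(\<Sum>j\<le>k. fst (if j = 0 then m else Y j)) = fst m + (\<Sum>j\<in>{..k} - {0::nat}. fst (Y j))"
    for m :: "real \<times> bool" and Y
    by (subst sum.remove[of "{..k}" 0]) (auto intro!: sum.cong)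
  let ?rest = "\<lambda>Y. c - (\<Sum>j\<in>{..k} - {0}. fst (Y j))"
  have "AE z in mark_law N \<Otimes>\<^sub>M PiM (UNIV - {0}) (\<lambda>k::nat. mark_law N). fst (fst z) \<noteq> ?rest (snd z)"
  proof (rule AE_pair_measure_neq[OF prob_space_mark_law[OF N] prob_space_PiM[OF prob_space_mark_law[OF N]]])
    show "?rest \<in> borel_measurable (PiM (UNIV - {0}) (\<lambda>k::nat. mark_law N))" by measurable
    show "AE m in mark_law N. fst m \<noteq> c'" for c'
      using AE_mark_law_fst[OF N AE_gap_law[where c=c']] by eventually_elim simp
  qed simp
  then show "AE z in mark_law N \<Otimes>\<^sub>M PiM (UNIV - {0}) (\<lambda>k::nat. mark_law N).
      (\<Sum>j\<le>k. fst (((snd z)(0 := fst z)) j)) \<noteq> c"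
    by eventually_elim (simp add: split algebra_simps)
qed

text \<open>Conditionally on the marks of all other pairs, the \<open>k\<close>-th mark time of the pair \<open>x\<close> has a
  diffuse law.\<close>

lemma AE_mark_time_neq:
  assumes N: "N \<ge> 1" and "x \<noteq> x'"
  shows "AE w in marks_measure N. mark_time w x k \<noteq> mark_time w x' k'"
  unfolding marks_measure_def
proof (rule AE_PiM_split_component[where i=x])
  show "prob_space (mark_seq_law N)" for i by (rule prob_space_mark_seq_law[OF N])
  have "{w \<in> space (marks_measure N). mark_time w x k \<noteq> mark_time w x' k'} \<in> sets (marks_measure N)"
    by measurable
  then show "{w \<in> space (PiM UNIV (\<lambda>_::int. mark_seq_law N)). mark_time w x k \<noteq> mark_time w x' k'}
      \<in> sets (PiM UNIV (\<lambda>_::int. mark_seq_law N))"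
    by (simp add: marks_measure_def)
  have x': "(\<lambda>X. X x') \<in> measurable (PiM (UNIV - {x}) (\<lambda>_::int. mark_seq_law N)) (mark_seq_law N)"
    by (rule measurable_component_singleton) (use \<open>x \<noteq> x'\<close> in auto)
  have "AE z in mark_seq_law N \<Otimes>\<^sub>M PiM (UNIV - {x}) (\<lambda>_::int. mark_seq_law N).
      (\<lambda>\<psi>. \<Sum>j\<le>k. fst (\<psi> j)) (fst z) \<noteq> (\<lambda>X. \<Sum>j\<le>k'. fst (X x' j)) (snd z)"
  proof (rule AE_pair_measure_neq[OF prob_space_mark_seq_law[OF N] prob_space_PiM[OF prob_space_mark_seq_law[OF N]]])
    show "(\<lambda>X. \<Sum>j\<le>k'. fst (X x' j)) \<in> borel_measurable (PiM (UNIV - {x}) (\<lambda>_::int. mark_seq_law N))"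
      using x' by measurable
  qed (use AE_mark_seq_sum_neq[OF N] in simp_all)
  then show "AE z in mark_seq_law N \<Otimes>\<^sub>M PiM (UNIV - {x}) (\<lambda>_::int. mark_seq_law N).
      mark_time ((snd z)(x := fst z)) x k \<noteq> mark_time ((snd z)(x := fst z)) x' k'"
    using \<open>x \<noteq> x'\<close> by (simp add: mark_time_def)
qed

definition good_sample :: "real \<Rightarrow> sample \<Rightarrow> bool" where
  "good_sample t w \<longleftrightarrow> (\<forall>x k. 0 < fst (w x k)) \<and> (\<forall>x. \<exists>j. t < fst (w x j)) \<and>
     (\<forall>x x' k k'. x \<noteq> x' \<longrightarrow> mark_time w x k \<noteq> mark_time w x' k')"

lemma pred_good_sample[measurable]: "Measurable.pred (marks_measure N) (good_sample t)"
  unfolding good_sample_def by measurable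

lemma AE_good_sample:
  assumes N: "N \<ge> 1" and t: "0 \<le> t"
  shows "AE w in marks_measure N. good_sample t w"
proof -
  have "AE m in mark_law N. 0 < fst m"
    using AE_mark_law_fst[OF N AE_gap_law[where c=0]] by eventually_elim simp
  then have pos: "AE w in marks_measure N. \<forall>x k. 0 < fst (w x k)"
    by (intro AE_marks_all[OF N] AE_mark_seq_all[OF N])
  have "AE w in marks_measure N. x \<noteq> x' \<longrightarrow> mark_time w x k \<noteq> mark_time w x' k'" for x x' k k'
    by (cases "x = x'") (simp_all add: AE_mark_time_neq[OF N])
  then have ties: "AE w in marks_measure N. \<forall>x x' k k'. x \<noteq> x' \<longrightarrow> mark_time w x k \<noteq> mark_time w x' k'"
    by (intro AE_all_countable[THEN iffD2] allI)
  show ?thesis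
    using pos AE_marks_all[OF N AE_mark_seq_exceeds[OF N t]] ties
    by eventually_elim (simp add: good_sample_def)
qed

section \<open>The stirring dynamics on a good sample\<close>

definition inner_pairs :: "nat \<Rightarrow> int set" where
  "inner_pairs N = {x. - int N \<le> x \<and> x + 1 \<le> int N}"

definition time_of_mark :: "sample \<Rightarrow> int \<times> nat \<Rightarrow> real" where
  "time_of_mark w p = mark_time w (fst p) (snd p)"

definition effective_marks :: "nat \<Rightarrow> sample \<Rightarrow> real \<Rightarrow> (int \<times> nat) set" where
  "effective_marks N w r = {p. fst p \<in> inner_pairs N \<and> time_of_mark w p \<le> r}"

definition effective_mark_list :: "nat \<Rightarrow> real \<Rightarrow> sample \<Rightarrow> (int \<times> nat) list" where
  "effective_mark_list N t w = sorted_key_list_of_set (time_of_mark w) (effective_marks N w t)"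

lemma finite_inner_pairs: "finite (inner_pairs N)"
proof -
  have "inner_pairs N = {- int N .. int N - 1}" by (auto simp: inner_pairs_def)
  then show ?thesis by simp
qed

lemma strict_mono_mark_time: "good_sample t w \<Longrightarrow> strict_mono (mark_time w x)"
  unfolding strict_mono_Suc_iff by (simp add: mark_time_def good_sample_def)

lemma mark_time_pos:
  assumes good: "good_sample t w"
  shows "0 < mark_time w x k"
proof -
  have "0 < mark_time w x 0" using good by (simp add: mark_time_def good_sample_def)
  also have "\<dots> \<le> mark_time w x k" by (simp add: strict_mono_less_eq[OF strict_mono_mark_time[OF good]])
  finally show ?thesis .
qed

lemma inj_time_of_mark:
  assumes good: "good_sample t w"
  shows "inj (time_of_mark w)"
proof (rule injI)
  fix p q assume eq: "time_of_mark w p = time_of_mark w q"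
  then have "fst p = fst q" using good unfolding good_sample_def time_of_mark_def by metis
  moreover from this have "snd p = snd q"
    using eq strict_mono_eq[OF strict_mono_mark_time[OF good]] by (simp add: time_of_mark_def)
  ultimately show "p = q" by (simp add: prod_eq_iff)
qed

lemma finite_effective_marks:
  assumes good: "good_sample t w" and "r \<le> t"
  shows "finite (effective_marks N w r)"
proof -
  obtain J where J: "\<And>x. t < fst (w x (J x))"
    using good unfolding good_sample_def by metis
  have "k < J x" if "(x, k) \<in> effective_marks N w r" for x k
  proof -
    have le: "mark_time w x k \<le> t"
      using that \<open>r \<le> t\<close> by (auto simp: effective_marks_def time_of_mark_def)
    have "fst (w x (J x)) \<le> mark_time w x (J x)"
      using good unfolding mark_time_def good_sample_def
      by (intro member_le_sum) (auto simp: less_imp_le)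
    then have "mark_time w x k < mark_time w x (J x)" using J[of x] le by simp
    then show "k < J x" using strict_mono_less[OF strict_mono_mark_time[OF good]] by simp
  qed
  then have "effective_marks N w r \<subseteq> Sigma (inner_pairs N) (\<lambda>x. {..<J x})"
    by (auto simp: effective_marks_def)
  then show ?thesis by (rule finite_subset) (auto intro: finite_inner_pairs)
qed

lemma effective_mark_list_eq_iff:
  assumes good: "good_sample t w"
  shows "effective_mark_list N t w = l \<longleftrightarrow>
    set l = effective_marks N w t \<and> sorted_wrt (<) (map (time_of_mark w) l)"
  unfolding effective_mark_list_def
  using inj_time_of_mark[OF good] finite_effective_marks[OF good order_refl]
  by (intro sorted_key_list_of_set_eq_iff) (auto intro: inj_on_subset)

lemma
  assumes good: "good_sample t w"
  shows set_effective_mark_list: "set (effective_mark_list N t w) = effective_marks N w t"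
    and sorted_effective_mark_list: "sorted_wrt (<) (map (time_of_mark w) (effective_mark_list N t w))"
  using effective_mark_list_eq_iff[OF good] by blast+

text \<open>\<open>ev_early\<close> records whether the mark occurs by time \<open>s\<close>.\<close>

datatype event = Event (ev_pair: int) (ev_num: nat) (ev_active: bool) (ev_early: bool)

instance event :: countable by countable_datatype

definition event_of :: "sample \<Rightarrow> real \<Rightarrow> int \<times> nat \<Rightarrow> event" where
  "event_of w s p = Event (fst p) (snd p) (snd (w (fst p) (snd p))) (time_of_mark w p \<le> s)"

definition sample_word :: "nat \<Rightarrow> real \<Rightarrow> real \<Rightarrow> sample \<Rightarrow> event list" where
  "sample_word N t s w = map (event_of w s) (effective_mark_list N t w)"

definition apply_event :: "event \<Rightarrow> int list \<Rightarrow> int list" where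
  "apply_event e ys = (if ev_active e then map (swap_site (ev_pair e)) ys else ys)"

definition config_before :: "int list \<Rightarrow> event list \<Rightarrow> nat \<Rightarrow> int list" where
  "config_before xs W i = fold apply_event (take i W) xs"

definition events_inside :: "nat \<Rightarrow> event list \<Rightarrow> bool" where
  "events_inside N W \<longleftrightarrow> (\<forall>e\<in>set W. ev_pair e \<in> inner_pairs N)"

lemma length_apply_event[simp]: "length (apply_event e ys) = length ys"
  by (simp add: apply_event_def)

lemma length_fold_apply_event[simp]: "length (fold apply_event W ys) = length ys"
  by (induction W arbitrary: ys) auto

lemma swap_site_swap_site[simp]: "swap_site a (swap_site a p) = p"
  by (auto simp: swap_site_def)

lemma distinct_fold_apply_event: "distinct ys \<Longrightarrow> distinct (fold apply_event W ys)"
proof (induction W arbitrary: ys)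
  case (Cons e W)
  have "inj (swap_site (ev_pair e))" by (rule injI) (metis swap_site_swap_site)
  then have "distinct (apply_event e ys)"
    using Cons.prems by (simp add: apply_event_def distinct_map inj_on_subset)
  then show ?case using Cons.IH by simp
qed simp

lemma set_fold_apply_event_subset:
  assumes "events_inside N W" and "set ys \<subseteq> Lambda N"
  shows "set (fold apply_event W ys) \<subseteq> Lambda N"
proof (rule fold_invariant[where Q="\<lambda>e. ev_pair e \<in> inner_pairs N" and P="\<lambda>ys. set ys \<subseteq> Lambda N"])
  show "e \<in> set W \<Longrightarrow> ev_pair e \<in> inner_pairs N" for e
    using assms(1) by (simp add: events_inside_def)
  show "set (apply_event e zs) \<subseteq> Lambda N"
    if "ev_pair e \<in> inner_pairs N" "set zs \<subseteq> Lambda N" for e zs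
    using that by (auto simp: apply_event_def swap_site_def inner_pairs_def Lambda_def)
qed (fact assms(2))

lemma events_inside_map_event_of:
  "(\<And>p. p \<in> set L \<Longrightarrow> fst p \<in> inner_pairs N) \<Longrightarrow> events_inside N (map (event_of w s) L)"
  by (auto simp: events_inside_def event_of_def)

lemma events_inside_sample_word: "good_sample t w \<Longrightarrow> events_inside N (sample_word N t s w)"
  unfolding sample_word_def
  by (rule events_inside_map_event_of) (simp add: set_effective_mark_list effective_marks_def)

lemma effective_times_eq_image: "effective_times N w r = time_of_mark w ` effective_marks N w r"
  by (force simp: effective_times_def effective_marks_def time_of_mark_def inner_pairs_def image_iff)

lemma step_at_time_of_mark:
  assumes good: "good_sample t w" and p: "fst p \<in> inner_pairs N"
  shows "step_at N w (time_of_mark w p) = apply_event (event_of w s p)"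
proof -
  have "mark_time w x k = time_of_mark w p \<longleftrightarrow> (x, k) = p" for x k
    using injD[OF inj_time_of_mark[OF good], of "(x, k)" p] by (auto simp: time_of_mark_def)
  then have "active_pairs_at N w (time_of_mark w p) = (if snd (w (fst p) (snd p)) then {fst p} else {})"
    using p by (cases p) (auto simp: active_pairs_at_def mark_active_def inner_pairs_def)
  then show ?thesis by (simp add: step_at_def apply_event_def event_of_def fun_eq_iff)
qed

lemma config_eq_fold_events:
  assumes good: "good_sample t w" and "r \<le> t"
  shows "config N w xs r
    = fold apply_event (map (event_of w s) (filter (\<lambda>p. time_of_mark w p \<le> r) (effective_mark_list N t w))) xs"
proof -
  let ?L = "filter (\<lambda>p. time_of_mark w p \<le> r) (effective_mark_list N t w)"
  have L: "set ?L = effective_marks N w r"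
    using set_effective_mark_list[OF good] \<open>r \<le> t\<close> by (auto simp: effective_marks_def)
  have sorted: "sorted_wrt (<) (map (time_of_mark w) ?L)"
    using sorted_effective_mark_list[OF good] by (simp add: sorted_wrt_map sorted_wrt_filter)
  have "effective_times N w r = set (map (time_of_mark w) ?L)"
    using L by (simp add: effective_times_eq_image)
  then have "sorted_list_of_set (effective_times N w r) = map (time_of_mark w) ?L"
    using sorted by (simp only:) (intro sorted_list_of_set.idem_if_sorted_distinct, auto simp: strict_sorted_iff)
  then have "config N w xs r = fold (step_at N w \<circ> time_of_mark w) ?L xs"
    by (simp add: config_def fold_map)
  also have "\<dots> = fold (apply_event \<circ> event_of w s) ?L xs"
    using L step_at_time_of_mark[OF good] by (intro fold_cong) (auto simp: effective_marks_def)
  finally show ?thesis by (simp add: fold_map)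
qed

lemma config_sample_word:
  assumes good: "good_sample t w"
  shows "config N w xs t = fold apply_event (sample_word N t s w) xs"
proof -
  have "filter (\<lambda>p. time_of_mark w p \<le> t) (effective_mark_list N t w) = effective_mark_list N t w"
    using set_effective_mark_list[OF good] by (auto simp: effective_marks_def)
  then show ?thesis
    using config_eq_fold_events[OF good order_refl, where N=N and xs=xs and s=s] by (simp add: sample_word_def)
qed

lemma config_at_nth_mark:
  assumes good: "good_sample t w" and i: "i < length (effective_mark_list N t w)"
  shows "config N w xs (time_of_mark w (effective_mark_list N t w ! i))
    = apply_event (sample_word N t s w ! i) (config_before xs (sample_word N t s w) i)"
proof -
  let ?S = "effective_mark_list N t w"
  have "time_of_mark w (?S ! i) \<le> t"
    using i nth_mem set_effective_mark_list[OF good] by (fastforce simp: effective_marks_def)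
  moreover have "filter (\<lambda>p. time_of_mark w p \<le> time_of_mark w (?S ! i)) ?S = take (Suc i) ?S"
    using sorted_effective_mark_list[OF good] i by (rule filter_le_nth_eq_take)
  ultimately show ?thesis
    using config_eq_fold_events[OF good, where r="time_of_mark w (?S ! i)" and N=N and xs=xs and s=s] i
    by (simp add: config_before_def sample_word_def take_map take_Suc_conv_app_nth)
qed

definition hits_at :: "int list \<Rightarrow> event list \<Rightarrow> nat \<Rightarrow> bool" where
  "hits_at xs W i \<longleftrightarrow> i < length W \<and> ev_early (W ! i) \<and>
     {ev_pair (W ! i), ev_pair (W ! i) + 1} = {config_before xs W i ! 0, config_before xs W i ! 1}"

definition hits :: "int list \<Rightarrow> event list \<Rightarrow> bool" where
  "hits xs W \<longleftrightarrow> (\<exists>i. hits_at xs W i)"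

definition hitting_times :: "nat \<Rightarrow> sample \<Rightarrow> int list \<Rightarrow> real set" where
  "hitting_times N w xs = {r. 0 \<le> r \<and>
      (let c = config N w xs r in
        \<bar>c ! 0 - c ! 1\<bar> = 1 \<and> (\<exists>x k. mark_time w x k = r \<and> {x, x + 1} = {c ! 0, c ! 1}))}"

lemma tau12_eq_Inf_hitting_times: "tau12 N w xs = Inf (ereal ` hitting_times N w xs)"
  by (simp add: tau12_def hitting_times_def)

text \<open>A swap at the pair \<open>{a, a + 1}\<close> maps this pair onto itself, so whether the first two
  particles occupy it can be read off before or after the event.\<close>

lemma pair_eq_apply_event_iff:
  assumes "length ys \<ge> 2"
  shows "{ev_pair e, ev_pair e + 1} = {apply_event e ys ! 0, apply_event e ys ! 1}
    \<longleftrightarrow> {ev_pair e, ev_pair e + 1} = {ys ! 0, ys ! 1}"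
proof -
  have swap: "{a, a + 1} = {swap_site a u, swap_site a v} \<longleftrightarrow> {a, a + 1} = {u, v}" for a u v :: int
    by (auto simp: swap_site_def doubleton_eq_iff split: if_splits)
  show ?thesis using assms by (elim length_ge_2E) (simp add: swap apply_event_def)
qed

lemma hits_at_sample_word_iff:
  assumes good: "good_sample t w" and len: "length xs \<ge> 2"
    and i: "i < length (effective_mark_list N t w)"
  defines "p \<equiv> effective_mark_list N t w ! i"
  shows "hits_at xs (sample_word N t s w) i \<longleftrightarrow> time_of_mark w p \<le> s \<and>
    {fst p, fst p + 1} = {config N w xs (time_of_mark w p) ! 0, config N w xs (time_of_mark w p) ! 1}"
proof -
  let ?W = "sample_word N t s w"
  have e: "?W ! i = event_of w s p" using i by (simp add: sample_word_def p_def)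
  have "length (config_before xs ?W i) \<ge> 2" using len by (simp add: config_before_def)
  moreover have "config N w xs (time_of_mark w p) = apply_event (?W ! i) (config_before xs ?W i)"
    unfolding p_def by (rule config_at_nth_mark[OF good i])
  ultimately show ?thesis
    using i pair_eq_apply_event_iff[of "config_before xs ?W i" "?W ! i"]
    by (simp add: hits_at_def e event_of_def sample_word_def p_def)
qed

lemma hitting_time_if_hits_at:
  assumes good: "good_sample t w" and len: "length xs \<ge> 2"
    and hit: "hits_at xs (sample_word N t s w) i"
  shows "time_of_mark w (effective_mark_list N t w ! i) \<in> hitting_times N w xs"
    and "time_of_mark w (effective_mark_list N t w ! i) \<le> s"
proof -
  let ?p = "effective_mark_list N t w ! i"
  let ?c = "config N w xs (time_of_mark w ?p)"
  have "i < length (effective_mark_list N t w)" using hit by (simp add: hits_at_def sample_word_def)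
  note iff = hits_at_sample_word_iff[OF good len this, where s=s]
  then have pair: "{fst ?p, fst ?p + 1} = {?c ! 0, ?c ! 1}" using hit by simp
  moreover from pair have "\<bar>?c ! 0 - ?c ! 1\<bar> = 1" by (auto simp: doubleton_eq_iff)
  moreover have "0 \<le> time_of_mark w ?p"
    using mark_time_pos[OF good] by (simp add: time_of_mark_def less_imp_le)
  ultimately show "time_of_mark w ?p \<in> hitting_times N w xs"
    unfolding hitting_times_def Let_def time_of_mark_def by blast
  show "time_of_mark w ?p \<le> s" using hit iff by simp
qed

lemma hits_at_if_hitting_time:
  assumes good: "good_sample t w" and len: "length xs \<ge> 2" and xs: "set xs \<subseteq> Lambda N"
    and r: "r \<in> hitting_times N w xs" "r \<le> t"
  obtains i where "i < length (effective_mark_list N t w)" "r = time_of_mark w (effective_mark_list N t w ! i)"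
    and "r \<le> s \<Longrightarrow> hits_at xs (sample_word N t s w) i"
proof -
  let ?S = "effective_mark_list N t w"
  let ?c = "config N w xs r"
  obtain x k where xk: "mark_time w x k = r" "{x, x + 1} = {?c ! 0, ?c ! 1}"
    using r(1) unfolding hitting_times_def Let_def by blast
  have "events_inside N (map (event_of w s) (filter (\<lambda>p. time_of_mark w p \<le> r) ?S))"
    using set_effective_mark_list[OF good]
    by (intro events_inside_map_event_of) (auto simp: effective_marks_def)
  then have "set ?c \<subseteq> Lambda N"
    using set_fold_apply_event_subset xs by (simp add: config_eq_fold_events[OF good r(2), where s=s])
  moreover have "length ?c = length xs"
    by (simp add: config_eq_fold_events[OF good r(2), where s=s])
  then have "?c ! 0 \<in> set ?c" "?c ! 1 \<in> set ?c" using len by (auto intro!: nth_mem)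
  ultimately have "x \<in> inner_pairs N"
    using xk(2) by (auto simp: doubleton_eq_iff Lambda_def inner_pairs_def)
  then have "(x, k) \<in> set ?S"
    using xk(1) r(2) set_effective_mark_list[OF good] by (simp add: effective_marks_def time_of_mark_def)
  then obtain i where i: "i < length ?S" "?S ! i = (x, k)" by (auto simp: in_set_conv_nth)
  have r_eq: "r = time_of_mark w (?S ! i)" using i xk(1) by (simp add: time_of_mark_def)
  show ?thesis
    using that[OF i(1) r_eq] hits_at_sample_word_iff[OF good len i(1), where s=s] i(2) xk(2) r_eq
    by simp
qed

lemma tau12_le_iff_hits:
  assumes good: "good_sample t w" and "s < t" and len: "length xs \<ge> 2" and xs: "set xs \<subseteq> Lambda N"
  shows "tau12 N w xs \<le> ereal s \<longleftrightarrow> hits xs (sample_word N t s w)"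
proof
  assume "hits xs (sample_word N t s w)"
  then obtain i where "hits_at xs (sample_word N t s w) i" by (auto simp: hits_def)
  note r = hitting_time_if_hits_at[OF good len this]
  have "tau12 N w xs \<le> ereal (time_of_mark w (effective_mark_list N t w ! i))"
    unfolding tau12_eq_Inf_hitting_times using r(1) by (intro Inf_lower imageI)
  also have "\<dots> \<le> ereal s" using r(2) by simp
  finally show "tau12 N w xs \<le> ereal s" .
next
  assume tau: "tau12 N w xs \<le> ereal s"
  show "hits xs (sample_word N t s w)"
  proof (rule ccontr)
    assume no_hit: "\<not> hits xs (sample_word N t s w)"
    text \<open>Then no hitting time lies in \<open>[0, s]\<close>; those in \<open>(s, t]\<close> are among finitely many
      mark times, so \<open>\<tau>\<close> is bounded below by the least of these and \<open>t\<close>.\<close>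
    define F where "F = insert t {u \<in> time_of_mark w ` set (effective_mark_list N t w). s < u}"
    have F: "finite F" "F \<noteq> {}" "\<forall>u\<in>F. s < u" using \<open>s < t\<close> by (auto simp: F_def)
    have bound: "Min F \<le> r" if r: "r \<in> hitting_times N w xs" for r
    proof (cases "r \<le> t")
      case True
      then obtain i where i: "i < length (effective_mark_list N t w)"
        and r_eq: "r = time_of_mark w (effective_mark_list N t w ! i)"
        and "r \<le> s \<Longrightarrow> hits_at xs (sample_word N t s w) i"
        using hits_at_if_hitting_time[OF good len xs r True] by blast
      then have "s < r" using no_hit unfolding hits_def by (meson not_le)
      moreover have "r \<in> time_of_mark w ` set (effective_mark_list N t w)"
        unfolding r_eq using i by (intro imageI nth_mem)
      ultimately have "r \<in> F" by (simp add: F_def)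
      then show ?thesis by (rule Min_le[OF F(1)])
    next
      case False
      have "Min F \<le> t" by (rule Min_le[OF F(1)]) (simp add: F_def)
      then show ?thesis using False by simp
    qed
    have "ereal (Min F) \<le> tau12 N w xs"
      unfolding tau12_eq_Inf_hitting_times by (rule Inf_greatest) (auto simp: bound)
    then have "ereal (Min F) \<le> ereal s" using tau by (rule order_trans)
    moreover have "s < Min F" using F Min_in by blast
    ultimately show False by simp
  qed
qed

section \<open>Reflection at the first hit\<close>

fun toggle_event :: "event \<Rightarrow> event" where
  "toggle_event (Event x k a b) = Event x k (\<not> a) b"

lemma toggle_event_simps[simp]:
  "ev_pair (toggle_event e) = ev_pair e" "ev_num (toggle_event e) = ev_num e"
  "ev_active (toggle_event e) = (\<not> ev_active e)" "ev_early (toggle_event e) = ev_early e"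
  "toggle_event (toggle_event e) = e"
  by (cases e; simp)+

definition first_hit :: "int list \<Rightarrow> event list \<Rightarrow> nat" where
  "first_hit xs W = (LEAST i. hits_at xs W i)"

definition reflect :: "int list \<Rightarrow> event list \<Rightarrow> event list" where
  "reflect xs W = (if hits xs W then W[first_hit xs W := toggle_event (W ! first_hit xs W)] else W)"

definition swap_first_two :: "int list \<Rightarrow> int list" where
  "swap_first_two ys = ys ! 1 # ys ! 0 # drop 2 ys"

lemma hits_at_first_hit: "hits xs W \<Longrightarrow> hits_at xs W (first_hit xs W)"
  unfolding hits_def first_hit_def by (rule LeastI_ex)

lemma first_hit_less_length: "hits xs W \<Longrightarrow> first_hit xs W < length W"
  using hits_at_first_hit by (simp add: hits_at_def)

lemma hits_at_toggle_iff:
  assumes "j \<le> i"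
  shows "hits_at xs (W[i := toggle_event (W ! i)]) j \<longleftrightarrow> hits_at xs W j"
proof (cases "j < length W")
  case True
  have "take j (W[i := toggle_event (W ! i)]) = take j W" using assms by simp
  moreover have "W[i := toggle_event (W ! i)] ! j = (if i = j then toggle_event (W ! j) else W ! j)"
    using True by (simp add: nth_list_update)
  ultimately show ?thesis by (simp add: hits_at_def config_before_def)
qed (simp add: hits_at_def)

lemma hits_reflect:
  assumes "hits xs W"
  shows "hits xs (reflect xs W)" and "first_hit xs (reflect xs W) = first_hit xs W"
proof -
  let ?i = "first_hit xs W"
  have refl: "reflect xs W = W[?i := toggle_event (W ! ?i)]" using assms by (simp add: reflect_def)
  have hit: "hits_at xs (reflect xs W) ?i"
    unfolding refl hits_at_toggle_iff[OF order_refl] by (rule hits_at_first_hit[OF assms])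
  then show "hits xs (reflect xs W)" by (auto simp: hits_def)
  have before: "\<not> hits_at xs (reflect xs W) j" if "j < ?i" for j
  proof -
    have "\<not> hits_at xs W j" using not_less_Least[of j "hits_at xs W"] that by (simp add: first_hit_def)
    then show ?thesis unfolding refl hits_at_toggle_iff[OF less_imp_le[OF that]] .
  qed
  show "first_hit xs (reflect xs W) = ?i"
    unfolding first_hit_def[of xs "reflect xs W"]
  proof (rule Least_equality)
    show "?i \<le> j" if "hits_at xs (reflect xs W) j" for j
      using before that not_le by blast
  qed (fact hit)
qed

lemma reflect_reflect: "reflect xs (reflect xs W) = W"
proof (cases "hits xs W")
  case True
  then show ?thesis
    using hits_reflect[OF True] first_hit_less_length[OF True] by (simp add: reflect_def)
qed (simp add: reflect_def)

lemma events_inside_reflect: "events_inside N (reflect xs W) \<longleftrightarrow> events_inside N W"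
proof -
  have "map ev_pair (reflect xs W) = map ev_pair W"
  proof (cases "hits xs W")
    case True
    have "(map ev_pair W)[first_hit xs W := ev_pair (W ! first_hit xs W)] = map ev_pair W"
      using list_update_id[of "map ev_pair W" "first_hit xs W"] first_hit_less_length[OF True] by simp
    then show ?thesis using True by (simp add: reflect_def map_update)
  qed (simp add: reflect_def)
  moreover have "events_inside N V \<longleftrightarrow> set (map ev_pair V) \<subseteq> inner_pairs N" for V
    by (auto simp: events_inside_def)
  ultimately show ?thesis by (simp only:)
qed

lemma apply_event_swap_first_two:
  assumes "length ys \<ge> 2"
  shows "apply_event e (swap_first_two ys) = swap_first_two (apply_event e ys)"
  using assms by (elim length_ge_2E) (simp add: apply_event_def swap_first_two_def)

lemma fold_apply_event_swap_first_two:
  "length ys \<ge> 2 \<Longrightarrow> fold apply_event W (swap_first_two ys) = swap_first_two (fold apply_event W ys)"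
proof (induction W arbitrary: ys)
  case (Cons e W)
  then show ?case by (simp add: apply_event_swap_first_two)
qed simp

lemma map_swap_site_eq_swap_first_two:
  assumes "distinct ys" and "length ys \<ge> 2" and "{a, a + 1} = {ys ! 0, ys ! 1}"
  shows "map (swap_site a) ys = swap_first_two ys"
proof -
  obtain u v zs where ys: "ys = u # v # zs"
    using assms(2) by (rule length_ge_2E)
  with assms have uv: "{a, a + 1} = {u, v}" and "u \<notin> set zs" "v \<notin> set zs" by auto
  then have "map (swap_site a) zs = zs"
    by (intro map_idI) (auto simp: swap_site_def doubleton_eq_iff)
  moreover have "swap_site a u = v" "swap_site a v = u"
    using uv by (auto simp: swap_site_def doubleton_eq_iff)
  ultimately show ?thesis by (simp add: ys swap_first_two_def)
qed

lemma swap_first_two_swap_first_two: "length ys \<ge> 2 \<Longrightarrow> swap_first_two (swap_first_two ys) = ys"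
  by (elim length_ge_2E) (simp add: swap_first_two_def)

lemma fold_apply_event_split:
  assumes "i < length W"
  shows "fold apply_event W xs = fold apply_event (drop (Suc i) W) (apply_event (W ! i) (config_before xs W i))"
proof -
  have "fold apply_event W xs = fold apply_event (take i W @ W ! i # drop (Suc i) W) xs"
    using id_take_nth_drop[OF assms] by (rule arg_cong)
  also have "\<dots> = fold apply_event (drop (Suc i) W) (apply_event (W ! i) (config_before xs W i))"
    by (simp add: config_before_def)
  finally show ?thesis .
qed

lemma fold_apply_event_reflect:
  assumes len: "length xs \<ge> 2" and "distinct xs" and hit: "hits xs W"
  shows "fold apply_event (reflect xs W) xs = swap_first_two (fold apply_event W xs)"
proof -
  let ?i = "first_hit xs W"
  let ?e = "W ! ?i" and ?pre = "config_before xs W ?i"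
  have i: "?i < length W" by (rule first_hit_less_length[OF hit])
  have refl: "reflect xs W = W[?i := toggle_event ?e]" using hit by (simp add: reflect_def)
  have len_pre: "length ?pre \<ge> 2" using len by (simp add: config_before_def)
  have "{ev_pair ?e, ev_pair ?e + 1} = {?pre ! 0, ?pre ! 1}"
    using hits_at_first_hit[OF hit] by (simp add: hits_at_def)
  then have "map (swap_site (ev_pair ?e)) ?pre = swap_first_two ?pre"
    using \<open>distinct xs\<close> len_pre
    by (intro map_swap_site_eq_swap_first_two) (simp_all add: config_before_def distinct_fold_apply_event)
  then have swapped: "apply_event (toggle_event ?e) ?pre = swap_first_two (apply_event ?e ?pre)"
    using swap_first_two_swap_first_two[OF len_pre] by (simp add: apply_event_def)
  have parts: "reflect xs W ! ?i = toggle_event ?e" "config_before xs (reflect xs W) ?i = ?pre"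
    "drop (Suc ?i) (reflect xs W) = drop (Suc ?i) W"
    using i by (simp_all add: refl config_before_def)
  have "?i < length (reflect xs W)" using i by (simp add: refl)
  then have "fold apply_event (reflect xs W) xs = fold apply_event (drop (Suc ?i) (reflect xs W))
      (apply_event (reflect xs W ! ?i) (config_before xs (reflect xs W) ?i))"
    by (rule fold_apply_event_split)
  also have "\<dots> = fold apply_event (drop (Suc ?i) W) (swap_first_two (apply_event ?e ?pre))"
    by (simp only: parts swapped)
  also have "\<dots> = swap_first_two (fold apply_event W xs)"
    using fold_apply_event_split[OF i] len_pre by (simp add: fold_apply_event_swap_first_two)
  finally show ?thesis .
qed

text \<open>The condition \<open>events_inside\<close> holds for every observed word; it makes \<open>word_integrand\<close>
  antisymmetric under \<open>reflect\<close> for all words, since \<open>f\<close> is antisymmetric only on \<open>\<Lambda>\<^sub>N\<close>.\<close>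

definition word_integrand :: "nat \<Rightarrow> int list \<Rightarrow> (int list \<Rightarrow> real) \<Rightarrow> event list \<Rightarrow> real" where
  "word_integrand N xs f W = (if events_inside N W \<and> hits xs W then f (fold apply_event W xs) else 0)"

lemma word_integrand_reflect:
  assumes n: "n \<ge> 2" "length xs = n" and "distinct xs" and xs: "set xs \<subseteq> Lambda N"
    and anti: "\<And>y1 y2 ys. length ys = n - 2 \<Longrightarrow> set (y1 # y2 # ys) \<subseteq> Lambda N \<Longrightarrow>
           f (y2 # y1 # ys) = - f (y1 # y2 # ys)"
  shows "word_integrand N xs f (reflect xs W) = - word_integrand N xs f W"
proof (cases "events_inside N W \<and> hits xs W")
  case True
  then have inside: "events_inside N W" and hit: "hits xs W" by auto
  have "length (fold apply_event W xs) \<ge> 2" using n by simp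
  then obtain y1 y2 ys where C: "fold apply_event W xs = y1 # y2 # ys" by (rule length_ge_2E)
  have "length ys = n - 2" using arg_cong[OF C, of length] n by simp
  moreover have "set (y1 # y2 # ys) \<subseteq> Lambda N"
    using set_fold_apply_event_subset[OF inside xs] by (simp only: C)
  ultimately have "f (y2 # y1 # ys) = - f (y1 # y2 # ys)" by (rule anti)
  moreover have "fold apply_event (reflect xs W) xs = y2 # y1 # ys"
    using fold_apply_event_reflect[OF _ \<open>distinct xs\<close> hit] n by (simp add: C swap_first_two_def)
  ultimately show ?thesis
    using inside hit hits_reflect(1)[OF hit] by (simp add: word_integrand_def events_inside_reflect C)
next
  case False
  then have "\<not> (events_inside N (reflect xs W) \<and> hits xs (reflect xs W))"
    using events_inside_reflect[of N xs W] by (cases "hits xs W") (simp_all add: reflect_def)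
  with False show ?thesis unfolding word_integrand_def by (simp only: if_False)
qed

section \<open>The law of the observed word is invariant under reflection\<close>

lemma fst_toggle_mark[simp]: "fst (toggle_mark x k w y j) = fst (w y j)"
  by (simp add: toggle_mark_def toggle_activity_def)

lemma snd_toggle_mark:
  "snd (toggle_mark x k w y j) = (if (y, j) = (x, k) then \<not> snd (w y j) else snd (w y j))"
  by (simp add: toggle_mark_def toggle_activity_def)

lemma mark_time_toggle_mark[simp]: "mark_time (toggle_mark x k w) = mark_time w"
  by (simp add: mark_time_def fun_eq_iff)

lemma time_of_mark_toggle_mark[simp]: "time_of_mark (toggle_mark x k w) = time_of_mark w"
  by (simp add: time_of_mark_def fun_eq_iff)

lemma good_sample_toggle_mark[simp]: "good_sample t (toggle_mark x k w) = good_sample t w"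
  by (simp add: good_sample_def)

lemma effective_mark_list_toggle_mark[simp]:
  "effective_mark_list N t (toggle_mark x k w) = effective_mark_list N t w"
  by (simp add: effective_mark_list_def effective_marks_def)

lemma toggle_mark_toggle_mark[simp]: "toggle_mark x k (toggle_mark x k w) = w"
  by (simp add: toggle_mark_def toggle_activity_def fun_eq_iff)

lemma event_of_toggle_mark:
  "event_of (toggle_mark x k w) s p = (if p = (x, k) then toggle_event (event_of w s p) else event_of w s p)"
  by (cases p) (simp add: event_of_def snd_toggle_mark)

lemma sample_word_toggle_first_hit:
  assumes good: "good_sample t w" and hit: "hits xs (sample_word N t s w)"
  defines "e \<equiv> sample_word N t s w ! first_hit xs (sample_word N t s w)"
  shows "sample_word N t s (toggle_mark (ev_pair e) (ev_num e) w) = reflect xs (sample_word N t s w)"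
proof -
  let ?S = "effective_mark_list N t w" and ?W = "sample_word N t s w" and ?i = "first_hit xs (sample_word N t s w)"
  have i: "?i < length ?S" using first_hit_less_length[OF hit] by (simp add: sample_word_def)
  have pair: "(ev_pair e, ev_num e) = ?S ! ?i" using i by (simp add: e_def sample_word_def event_of_def)
  have "distinct ?S"
    using sorted_effective_mark_list[OF good] by (simp add: strict_sorted_iff distinct_map)
  then have "?S ! j = ?S ! ?i \<longleftrightarrow> j = ?i" if "j < length ?S" for j
    using that i nth_eq_iff_index_eq by blast
  then show ?thesis
    using hit i by (intro nth_equalityI)
      (auto simp: reflect_def sample_word_def event_of_toggle_mark pair nth_list_update)
qed

definition observed_word :: "nat \<Rightarrow> real \<Rightarrow> real \<Rightarrow> sample \<Rightarrow> event list" where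
  "observed_word N t s w = (if good_sample t w then sample_word N t s w else [])"

text \<open>A description of the fibres of \<open>sample_word\<close> by countably many measurable conditions on the
  marks.\<close>

definition consistent_word :: "nat \<Rightarrow> real \<Rightarrow> real \<Rightarrow> event list \<Rightarrow> sample \<Rightarrow> bool" where
  "consistent_word N t s W w \<longleftrightarrow>
     (\<forall>p. p \<in> set (map (\<lambda>e. (ev_pair e, ev_num e)) W) \<longleftrightarrow> fst p \<in> inner_pairs N \<and> time_of_mark w p \<le> t) \<and>
     sorted_wrt (\<lambda>e e'. time_of_mark w (ev_pair e, ev_num e) < time_of_mark w (ev_pair e', ev_num e')) W \<and>
     (\<forall>e\<in>set W. ev_active e = snd (w (ev_pair e) (ev_num e)) \<and>
        ev_early e = (time_of_mark w (ev_pair e, ev_num e) \<le> s))"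

lemma sample_word_eq_iff:
  assumes good: "good_sample t w"
  shows "sample_word N t s w = W \<longleftrightarrow> consistent_word N t s W w"
proof
  assume W: "sample_word N t s w = W"
  let ?S = "effective_mark_list N t w"
  have "map (\<lambda>e. (ev_pair e, ev_num e)) W = ?S"
    unfolding W[symmetric] by (simp add: sample_word_def event_of_def comp_def)
  then show "consistent_word N t s W w"
    using set_effective_mark_list[OF good] sorted_effective_mark_list[OF good]
    unfolding consistent_word_def W[symmetric]
    by (auto simp: sample_word_def event_of_def effective_marks_def sorted_wrt_map)
next
  assume C: "consistent_word N t s W w"
  let ?L = "map (\<lambda>e. (ev_pair e, ev_num e)) W"
  have "set ?L = effective_marks N w t"
    using C unfolding consistent_word_def effective_marks_def by blast
  moreover have "sorted_wrt (<) (map (time_of_mark w) ?L)"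
    using C by (simp add: consistent_word_def sorted_wrt_map)
  ultimately have "effective_mark_list N t w = ?L"
    by (simp add: effective_mark_list_eq_iff[OF good])
  moreover have "event_of w s (ev_pair e, ev_num e) = e" if "e \<in> set W" for e
    using C that by (cases e) (auto simp: consistent_word_def event_of_def)
  ultimately show "sample_word N t s w = W"
    by (simp add: sample_word_def comp_def map_idI)
qed

lemma pred_sorted_wrt[measurable (raw)]:
  "(\<And>x y. Measurable.pred M (\<lambda>w. R w x y)) \<Longrightarrow> Measurable.pred M (\<lambda>w. sorted_wrt (R w) xs)"
  by (induction xs) auto

lemma pred_consistent_word[measurable]: "Measurable.pred (marks_measure N) (consistent_word N t s W)"
  unfolding consistent_word_def time_of_mark_def by measurable

lemma measurable_observed_word[measurable]:
  "observed_word N t s \<in> measurable (marks_measure N) (count_space UNIV)"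
proof -
  have "observed_word N t s -` {W} \<inter> space (marks_measure N) \<in> sets (marks_measure N)" for W
  proof -
    have "observed_word N t s w = W \<longleftrightarrow>
        good_sample t w \<and> consistent_word N t s W w \<or> \<not> good_sample t w \<and> W = []" for w
      using sample_word_eq_iff[of t w N s W] by (cases "good_sample t w") (auto simp: observed_word_def)
    then have "observed_word N t s -` {W} \<inter> space (marks_measure N) = {w \<in> space (marks_measure N).
        good_sample t w \<and> consistent_word N t s W w \<or> \<not> good_sample t w \<and> W = []}"
      by auto
    also have "\<dots> \<in> sets (marks_measure N)" by measurable
    finally show ?thesis .
  qed
  then show ?thesis by (subst measurable_count_space_eq_countable) auto
qed

lemma observed_word_toggle_first_hit_iff:
  assumes hit: "hits xs W"
  defines "e \<equiv> W ! first_hit xs W"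
  shows "observed_word N t s w = reflect xs W \<longleftrightarrow>
    observed_word N t s (toggle_mark (ev_pair e) (ev_num e) w) = W"
proof -
  let ?O = "observed_word N t s" and ?T = "toggle_mark (ev_pair e) (ev_num e)"
  have "reflect xs W ! first_hit xs (reflect xs W) = reflect xs W ! first_hit xs W"
    by (simp only: hits_reflect(2)[OF hit])
  also have "\<dots> = toggle_event e"
    using hit first_hit_less_length[OF hit] by (simp add: reflect_def e_def)
  finally have e': "reflect xs W ! first_hit xs (reflect xs W) = toggle_event e" .
  have nonempty: "W \<noteq> []" "reflect xs W \<noteq> []"
    using hit hits_reflect(1)[OF hit] by (auto simp: hits_def hits_at_def)
  show ?thesis
  proof
    assume w: "?O w = reflect xs W"
    then have "good_sample t w" using nonempty by (auto simp: observed_word_def split: if_splits)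
    then show "?O (?T w) = W"
      using sample_word_toggle_first_hit[of t w xs N s] w hits_reflect(1)[OF hit] e'
      by (simp add: observed_word_def reflect_reflect)
  next
    assume w: "?O (?T w) = W"
    then have "good_sample t w" using nonempty by (auto simp: observed_word_def split: if_splits)
    then show "?O w = reflect xs W"
      using sample_word_toggle_first_hit[of t "?T w" xs N s] w hit
      by (simp add: observed_word_def e_def)
  qed
qed

lemma emeasure_observed_word_reflect:
  assumes N: "N \<ge> 1"
  shows "emeasure (marks_measure N) (observed_word N t s -` {reflect xs W} \<inter> space (marks_measure N))
       = emeasure (marks_measure N) (observed_word N t s -` {W} \<inter> space (marks_measure N))"
proof (cases "hits xs W")
  case True
  let ?M = "marks_measure N" and ?O = "observed_word N t s"
  let ?T = "toggle_mark (ev_pair (W ! first_hit xs W)) (ev_num (W ! first_hit xs W))"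
  have "?O -` {reflect xs W} \<inter> space ?M = ?T -` (?O -` {W} \<inter> space ?M) \<inter> space ?M"
    using observed_word_toggle_first_hit_iff[OF True] measurable_space[OF measurable_toggle_mark]
    by auto
  also have "emeasure ?M \<dots> = emeasure (distr ?M ?M ?T) (?O -` {W} \<inter> space ?M)"
    by (rule emeasure_distr[symmetric]) (simp_all add: measurable_toggle_mark)
  finally show ?thesis by (simp add: distr_toggle_mark[OF N])
qed (simp add: reflect_def)

lemma distr_observed_word_reflect:
  fixes N :: nat and t s :: real
  assumes "N \<ge> 1"
  defines "\<nu> \<equiv> distr (marks_measure N) (count_space UNIV) (observed_word N t s)"
  shows "distr \<nu> \<nu> (reflect xs) = \<nu>"
proof (rule measure_eqI_countable[where A=UNIV])
  fix W :: "event list"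
  have "reflect xs V = W \<longleftrightarrow> V = reflect xs W" for V
    using reflect_reflect by metis
  then have "reflect xs -` {W} = {reflect xs W}" by auto
  then show "emeasure (distr \<nu> \<nu> (reflect xs)) {W} = emeasure \<nu> {W}"
    unfolding \<nu>_def
    by (simp add: emeasure_distr emeasure_observed_word_reflect[OF assms(1)])
qed (simp_all add: \<nu>_def)

lemma integrand_eq_word_integrand:
  assumes good: "good_sample t w" and "s < t" and "length xs \<ge> 2" and "set xs \<subseteq> Lambda N"
  shows "(if tau12 N w xs \<le> ereal s then 1 else 0) * f (config N w xs t)
    = word_integrand N xs f (observed_word N t s w)"
  using assms
  by (simp add: tau12_le_iff_hits config_sample_word[OF good, where s=s] events_inside_sample_word
      observed_word_def word_integrand_def)

theorem lemma4p3:
  fixes N n :: nat and xs :: "int list" and s t :: real and f :: "int list \<Rightarrow> real"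
  assumes "N \<ge> 1"
    and "n \<ge> 2" and "length xs = n" and "distinct xs" and "set xs \<subseteq> Lambda N"
    and "0 < s" and "s < t"
    and "\<And>y1 y2 ys. length ys = n - 2 \<Longrightarrow> set (y1 # y2 # ys) \<subseteq> Lambda N \<Longrightarrow>
           f (y2 # y1 # ys) = - f (y1 # y2 # ys)"
  shows "(\<integral>\<omega>. (if tau12 N \<omega> xs \<le> ereal s then 1 else 0) * f (config N \<omega> xs t)
            \<partial>marks_measure N) = 0"
proof (cases "integrable (marks_measure N) (\<lambda>w. (if tau12 N w xs \<le> ereal s then 1 else 0) * f (config N w xs t))")
  \<comment> \<open>A non-integrable integrand has integral 0 by convention; integrability supplies the
    measurability of the integrand needed below.\<close>
  case True
  let ?M = "marks_measure N" and ?W = "observed_word N t s"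
  have len: "length xs \<ge> 2" and "0 \<le> t" using assms by auto
  from AE_good_sample[OF \<open>N \<ge> 1\<close> \<open>0 \<le> t\<close>]
  have "AE w in ?M. (if tau12 N w xs \<le> ereal s then 1 else 0) * f (config N w xs t)
      = word_integrand N xs f (?W w)"
    by eventually_elim (rule integrand_eq_word_integrand[OF _ \<open>s < t\<close> len \<open>set xs \<subseteq> Lambda N\<close>])
  then have "(\<integral>w. (if tau12 N w xs \<le> ereal s then 1 else 0) * f (config N w xs t) \<partial>?M)
      = (\<integral>w. word_integrand N xs f (?W w) \<partial>?M)"
    using True by (intro integral_cong_AE) auto
  also have "\<dots> = integral\<^sup>L (distr ?M (count_space UNIV) ?W) (word_integrand N xs f)"
    by (rule integral_distr[symmetric]) simp_all
  also have "\<dots> = 0"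
    using distr_observed_word_reflect[OF \<open>N \<ge> 1\<close>] word_integrand_reflect[where f=f, OF assms(2-5,8)]
    by (intro integral_eq_0_if_odd_under_preserving_map) auto
  finally show ?thesis .
qed (simp add: not_integrable_integral_eq)

end
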